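(* Let $r,k\geq 2$ be integers. Then $D_{r,k}$ is a numerical semigroup.
   Context: For positive integers $v,b,r,k$, a $(v,b,r,k)$-configuration is a connected bipartite graph with $v$ vertices on one side, each of degree $r$, and $b$ vertices on the other side, each of degree $k$, containing no cycle of length $4$. By convention the empty graph (with $v=b=0$) is also regarded as a configuration. A tuple $(v,b,r,k)$ is configurable if a $(v,b,r,k)$-configuration exists. Let $\mathbb{N}_0=\{0,1,2,\dots\}$ and define $$D_{r,k}=\left\{d\in\mathbb{N}_0:\left(d\tfrac{k}{\gcd(r,k)},\,d\tfrac{r}{\gcd(r,k)},\,r,\,k\right)\text{ is configurable}\right\}.$$ A numerical semigroup is a subset of $\mathbb{N}_0$ containing $0$, closed under addition, whose complement in $\mathbb{N}_0$ is finite. *)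

theory Defs
  imports Main
begin

text \<open>A bipartite graph with point side {0..<v} and line side {0..<b} is encoded by
  its edge (incidence) relation I, a set of pairs (point, line).\<close>

definition bip_adj :: "(nat \<times> nat) set \<Rightarrow> ((nat + nat) \<times> (nat + nat)) set" where
  "bip_adj I = {(Inl p, Inr l) | p l. (p, l) \<in> I} \<union> {(Inr l, Inl p) | p l. (p, l) \<in> I}"

definition bip_vertices :: "nat \<Rightarrow> nat \<Rightarrow> (nat + nat) set" where
  "bip_vertices v b = Inl ` {..<v} \<union> Inr ` {..<b}"

definition is_configuration :: "nat \<Rightarrow> nat \<Rightarrow> nat \<Rightarrow> nat \<Rightarrow> (nat \<times> nat) set \<Rightarrow> bool" where
  "is_configuration v b r k I \<longleftrightarrow>
     I \<subseteq> {..<v} \<times> {..<b}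
   \<and> (\<forall>p<v. card {l. (p, l) \<in> I} = r)
   \<and> (\<forall>l<b. card {p. (p, l) \<in> I} = k)
   \<and> (\<forall>p q l m. p \<noteq> q \<and> l \<noteq> m \<and> (p, l) \<in> I \<and> (q, l) \<in> I \<and> (p, m) \<in> I \<and> (q, m) \<in> I \<longrightarrow> False)
   \<and> (\<forall>x\<in>bip_vertices v b. \<forall>y\<in>bip_vertices v b. (x, y) \<in> (bip_adj I)\<^sup>*)"

text \<open>The empty graph (v = b = 0) is a configuration by convention.\<close>
definition configurable :: "nat \<Rightarrow> nat \<Rightarrow> nat \<Rightarrow> nat \<Rightarrow> bool" where
  "configurable v b r k \<longleftrightarrow> (v = 0 \<and> b = 0) \<or> (\<exists>I. is_configuration v b r k I)"

definition D :: "nat \<Rightarrow> nat \<Rightarrow> nat set" where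
  "D r k = {d. configurable (d * (k div gcd r k)) (d * (r div gcd r k)) r k}"

definition numerical_semigroup :: "nat set \<Rightarrow> bool" where
  "numerical_semigroup S \<longleftrightarrow> 0 \<in> S \<and> (\<forall>x\<in>S. \<forall>y\<in>S. x + y \<in> S) \<and> finite (UNIV - S)"

end

theory Submission
  imports Defs "HOL-Number_Theory.Cong"
begin

text \<open>\<open>D r k\<close> contains 0 and is closed under addition: two configurations are glued into one by
  switching a non-bridge incidence of the first with an incidence of the second, which preserves
  degrees, connectivity and the absence of 4-cycles. Its complement is then finite as soon as it
  contains two coprime elements. With \<open>g = gcd r k\<close>, lifting the complete bipartite multigraph on
  \<open>k/g\<close> points and \<open>r/g\<close> lines with \<open>g\<close> parallel edges along suitable powers-of-two voltages
  yields configurations with \<open>n\<close> copies of each vertex for every large \<open>n \<equiv> 1\<close> modulo a fixed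
  \<open>W\<close>, and two consecutive such \<open>n\<close> are coprime.\<close>

section \<open>Connectivity in symmetric relations\<close>

lemma sym_Diff_edge: "sym E \<Longrightarrow> sym (E - {(x, y), (y, x)})"
  unfolding sym_def by blast

lemma rtrancl_sym_swap: "sym E \<Longrightarrow> (x, y) \<in> E\<^sup>* \<Longrightarrow> (y, x) \<in> E\<^sup>*"
  by (rule symD[OF sym_rtrancl])

lemma rtrancl_map:
  assumes "\<And>x y. (x, y) \<in> r \<Longrightarrow> (f x, f y) \<in> s" and "(x, y) \<in> r\<^sup>*"
  shows "(f x, f y) \<in> s\<^sup>*"
  using assms(2)
proof (induction rule: rtrancl_induct)
  case (step y z)
  then show ?case by (meson assms(1) rtrancl_into_rtrancl)
qed simp

lemma rtrancl_beyond_bridge: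
  assumes "(y, z) \<in> E" "z \<noteq> x" "x \<noteq> y" and bridge: "(z, y) \<notin> (E - {(y, z), (z, y)})\<^sup>*"
    and "(z, w) \<in> (E - {(y, z), (z, y)})\<^sup>*"
  shows "(y, w) \<in> (E - {(x, y), (y, x)})\<^sup>*"
  using assms(5)
proof (induction rule: rtrancl_induct)
  case base
  have "(y, z) \<in> E - {(x, y), (y, x)}" using assms(1-3) by auto
  then show ?case by blast
next
  case (step w w')
  show ?case
  proof (cases "(w, w') \<in> {(x, y), (y, x)}")
    case True
    then show ?thesis using step(1) bridge by auto
  next
    case False
    then show ?thesis using step by (meson DiffI DiffD1 rtrancl.rtrancl_into_rtrancl)
  qed
qed

text \<open>Take an edge \<open>(x, y)\<close> minimising the set of vertices reachable from \<open>y\<close> without it; if it were a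
  bridge, a further edge \<open>(y, z)\<close> would be a bridge with a strictly smaller such set.\<close>

lemma exists_non_bridge_edge:
  assumes fin: "finite V" and sub: "E \<subseteq> V \<times> V" and sE: "sym E" and irr: "irrefl E"
    and u: "u \<in> V" and deg: "\<And>x. x \<in> V \<Longrightarrow> \<exists>y z. y \<noteq> z \<and> (x, y) \<in> E \<and> (x, z) \<in> E"
  shows "\<exists>x y. (x, y) \<in> E \<and> (x, y) \<in> (E - {(x, y), (y, x)})\<^sup>*"
proof (rule ccontr)
  assume no_cycle: "\<not> ?thesis"
  define S where "S = (\<lambda>(x, y). {w. (y, w) \<in> (E - {(x, y), (y, x)})\<^sup>*})"
  have S_sub: "S (x, y) \<subseteq> V" if "(x, y) \<in> E" for x y
  proof
    fix w assume "w \<in> S (x, y)"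
    then have "(y, w) \<in> (E - {(x, y), (y, x)})\<^sup>*" by (simp add: S_def)
    then show "w \<in> V" using that sub by (induction rule: rtrancl_induct) auto
  qed
  from deg[OF u] obtain y0 where "(u, y0) \<in> E" by blast
  then obtain e where e: "e \<in> E" and e_min: "\<forall>e' \<in> E. card (S e) \<le> card (S e')"
    using ex_has_least_nat[of "\<lambda>e. e \<in> E" "(u, y0)" "\<lambda>e. card (S e)"] by blast
  obtain x y where exy: "e = (x, y)" by (cases e)
  have "x \<noteq> y" using e exy irr by (auto simp: irrefl_def)
  have "y \<in> V" using e exy sub by auto
  with deg obtain z1 z2 where "z1 \<noteq> z2" "(y, z1) \<in> E" "(y, z2) \<in> E" by blast
  then obtain z where yz: "(y, z) \<in> E" and "z \<noteq> x" by blast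
  define E2 where "E2 = E - {(y, z), (z, y)}"
  have zy: "(z, y) \<notin> E2\<^sup>*"
  proof
    assume "(z, y) \<in> E2\<^sup>*"
    then have "(y, z) \<in> E2\<^sup>*" using rtrancl_sym_swap[OF sym_Diff_edge[OF sE]] E2_def by blast
    then show False using no_cycle yz E2_def by blast
  qed
  then have "S (y, z) \<subseteq> S (x, y)"
    using rtrancl_beyond_bridge[OF yz \<open>z \<noteq> x\<close> \<open>x \<noteq> y\<close>] by (auto simp: S_def E2_def)
  moreover have "y \<in> S (x, y)" "y \<notin> S (y, z)" using zy by (simp_all add: S_def E2_def)
  moreover have "finite (S (x, y))" using S_sub e exy fin finite_subset by blast
  ultimately have "card (S (y, z)) < card (S (x, y))" by (metis psubsetI psubset_card_mono)
  with e_min yz exy show False by fastforce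
qed

lemma rtrancl_Diff_non_bridge:
  assumes sE: "sym E" and non_bridge: "(x, y) \<in> (E - {(x, y), (y, x)})\<^sup>*" and ab: "(a, b) \<in> E\<^sup>*"
  shows "(a, b) \<in> (E - {(x, y), (y, x)})\<^sup>*"
  using ab
proof (induction rule: rtrancl_induct)
  case (step u w)
  have "(y, x) \<in> (E - {(x, y), (y, x)})\<^sup>*"
    using rtrancl_sym_swap[OF sym_Diff_edge[OF sE] non_bridge] .
  then show ?case using step non_bridge
    by (cases "(u, w) \<in> {(x, y), (y, x)}") (auto intro: rtrancl_trans rtrancl_into_rtrancl)
qed simp

lemma rtrancl_Diff_edge:
  assumes "(x, b) \<in> E\<^sup>*"
  shows "(x, b) \<in> (E - {(x, y), (y, x)})\<^sup>* \<or> (y, b) \<in> (E - {(x, y), (y, x)})\<^sup>*"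
  using assms
proof (induction rule: rtrancl_induct)
  case (step u w)
  then show ?case
    by (cases "(u, w) \<in> {(x, y), (y, x)}") (auto intro: rtrancl_into_rtrancl)
qed simp

lemma bip_adj_mono: "J \<subseteq> J' \<Longrightarrow> bip_adj J \<subseteq> bip_adj J'"
  unfolding bip_adj_def by blast

lemma sym_bip_adj: "sym (bip_adj I)"
  unfolding bip_adj_def sym_def by blast

lemma irrefl_bip_adj: "irrefl (bip_adj I)"
  unfolding bip_adj_def irrefl_def by blast

lemma bip_adjI:
  "(p, l) \<in> I \<Longrightarrow> (Inl p, Inr l) \<in> bip_adj I"
  "(p, l) \<in> I \<Longrightarrow> (Inr l, Inl p) \<in> bip_adj I"
  unfolding bip_adj_def by blast+

lemma bip_adj_Diff_edge: "bip_adj (I - {(p, l)}) = bip_adj I - {(Inl p, Inr l), (Inr l, Inl p)}"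
  unfolding bip_adj_def by blast

lemma mem_bip_vertices_iff:
  "Inl p \<in> bip_vertices v b \<longleftrightarrow> p < v"
  "Inr l \<in> bip_vertices v b \<longleftrightarrow> l < b"
  unfolding bip_vertices_def by auto

lemma configuration_subset:
  "is_configuration v b r k I \<Longrightarrow> (p, l) \<in> I \<Longrightarrow> p < v \<and> l < b"
  unfolding is_configuration_def by blast

lemma configuration_point_degree:
  "is_configuration v b r k I \<Longrightarrow> p < v \<Longrightarrow> card {l. (p, l) \<in> I} = r"
  unfolding is_configuration_def by blast

lemma configuration_line_degree:
  "is_configuration v b r k I \<Longrightarrow> l < b \<Longrightarrow> card {p. (p, l) \<in> I} = k"
  unfolding is_configuration_def by blast

lemma configuration_no_4cycle:
  "is_configuration v b r k I \<Longrightarrow> (p, l) \<in> I \<Longrightarrow> (q, l) \<in> I \<Longrightarrow> (p, m) \<in> I \<Longrightarrow> (q, m) \<in> I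
    \<Longrightarrow> p = q \<or> l = m"
  unfolding is_configuration_def by blast

lemma configuration_connected:
  "is_configuration v b r k I \<Longrightarrow> x \<in> bip_vertices v b \<Longrightarrow> y \<in> bip_vertices v b
    \<Longrightarrow> (x, y) \<in> (bip_adj I)\<^sup>*"
  unfolding is_configuration_def by blast

lemma is_configurationI:
  assumes "I \<subseteq> {..<v} \<times> {..<b}"
    and "\<And>p. p < v \<Longrightarrow> card {l. (p, l) \<in> I} = r"
    and "\<And>l. l < b \<Longrightarrow> card {p. (p, l) \<in> I} = k"
    and "\<And>p q l m. (p, l) \<in> I \<Longrightarrow> (q, l) \<in> I \<Longrightarrow> (p, m) \<in> I \<Longrightarrow> (q, m) \<in> I \<Longrightarrow> p = q \<or> l = m"
    and root: "\<And>x. x \<in> bip_vertices v b \<Longrightarrow> (z, x) \<in> (bip_adj I)\<^sup>*"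
  shows "is_configuration v b r k I"
proof -
  have "(x, y) \<in> (bip_adj I)\<^sup>*" if "x \<in> bip_vertices v b" "y \<in> bip_vertices v b" for x y
    using rtrancl_trans[OF rtrancl_sym_swap[OF sym_bip_adj root] root] that .
  with assms show ?thesis unfolding is_configuration_def by blast
qed

lemma configuration_two_neighbours:
  assumes conf: "is_configuration v b r k I" and "r \<ge> 2" "k \<ge> 2" and "x \<in> bip_vertices v b"
  shows "\<exists>y z. y \<noteq> z \<and> (x, y) \<in> bip_adj I \<and> (x, z) \<in> bip_adj I"
proof -
  have two: "\<exists>y z. y \<noteq> z \<and> y \<in> A \<and> z \<in> A" if "card A \<ge> 2" for A :: "nat set"
  proof -
    have "finite A" using that card.infinite by fastforce
    then show ?thesis using that card_le_Suc0_iff_eq[of A] by auto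
  qed
  consider p where "x = Inl p" "p < v" | l where "x = Inr l" "l < b"
    using \<open>x \<in> bip_vertices v b\<close> by (auto simp: bip_vertices_def)
  then show ?thesis
  proof cases
    case (1 p)
    then obtain y z where "y \<noteq> z" "(p, y) \<in> I" "(p, z) \<in> I"
      using two[of "{l. (p, l) \<in> I}"] configuration_point_degree[OF conf] \<open>r \<ge> 2\<close> by auto
    then show ?thesis using 1 by (blast intro: bip_adjI)
  next
    case (2 l)
    then obtain y z where "y \<noteq> z" "(y, l) \<in> I" "(z, l) \<in> I"
      using two[of "{p. (p, l) \<in> I}"] configuration_line_degree[OF conf] \<open>k \<ge> 2\<close> by auto
    then show ?thesis using 2 by (blast intro: bip_adjI)
  qed
qed

lemma configuration_non_bridge:
  assumes conf: "is_configuration v b r k I" and "v > 0" "r \<ge> 2" "k \<ge> 2"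
  obtains p l where "(p, l) \<in> I" "(Inl p, Inr l) \<in> (bip_adj (I - {(p, l)}))\<^sup>*"
proof -
  have "\<exists>x y. (x, y) \<in> bip_adj I \<and> (x, y) \<in> (bip_adj I - {(x, y), (y, x)})\<^sup>*"
  proof (rule exists_non_bridge_edge[OF _ _ sym_bip_adj irrefl_bip_adj])
    show "finite (bip_vertices v b)" by (simp add: bip_vertices_def)
    show "bip_adj I \<subseteq> bip_vertices v b \<times> bip_vertices v b"
      using configuration_subset[OF conf] by (auto simp: bip_adj_def bip_vertices_def)
    show "Inl 0 \<in> bip_vertices v b" using \<open>v > 0\<close> by (simp add: bip_vertices_def)
  qed (rule configuration_two_neighbours[OF conf \<open>r \<ge> 2\<close> \<open>k \<ge> 2\<close>])
  then obtain x y where xy: "(x, y) \<in> bip_adj I" "(x, y) \<in> (bip_adj I - {(x, y), (y, x)})\<^sup>*"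
    by blast
  then have yx: "(y, x) \<in> (bip_adj I - {(x, y), (y, x)})\<^sup>*"
    using rtrancl_sym_swap[OF sym_Diff_edge[OF sym_bip_adj]] by blast
  from xy(1) consider p l where "(p, l) \<in> I" "x = Inl p" "y = Inr l"
    | p l where "(p, l) \<in> I" "x = Inr l" "y = Inl p"
    unfolding bip_adj_def by blast
  then show ?thesis
  proof cases
    case (1 p l)
    with xy(2) have "(Inl p, Inr l) \<in> (bip_adj (I - {(p, l)}))\<^sup>*"
      by (simp add: bip_adj_Diff_edge)
    then show ?thesis by (rule that[OF 1(1)])
  next
    case (2 p l)
    with yx have "(Inl p, Inr l) \<in> (bip_adj (I - {(p, l)}))\<^sup>*"
      by (simp add: bip_adj_Diff_edge insert_commute)
    then show ?thesis by (rule that[OF 2(1)])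
  qed
qed

section \<open>Gluing two configurations\<close>

lemma card_insert_Diff_singleton:
  "finite A \<Longrightarrow> x \<in> A \<Longrightarrow> y \<notin> A \<Longrightarrow> card (insert y (A - {x})) = card A"
proof -
  assume "finite A" "x \<in> A" "y \<notin> A"
  then have "card (insert y (A - {x})) = Suc (card (A - {x}))" by (simp add: card_insert_disjoint)
  also have "\<dots> = card A" using card_Suc_Diff1 \<open>finite A\<close> \<open>x \<in> A\<close> .
  finally show ?thesis .
qed

definition shift_incidence :: "nat \<Rightarrow> nat \<Rightarrow> (nat \<times> nat) set \<Rightarrow> (nat \<times> nat) set" where
  "shift_incidence v b I = (\<lambda>(p, l). (v + p, b + l)) ` I"

definition shift_vertex :: "nat \<Rightarrow> nat \<Rightarrow> nat + nat \<Rightarrow> nat + nat" where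
  "shift_vertex v b = map_sum ((+) v) ((+) b)"

lemma mem_shift_incidence_iff:
  "(x, y) \<in> shift_incidence v b I \<longleftrightarrow> (\<exists>p l. x = v + p \<and> y = b + l \<and> (p, l) \<in> I)"
  unfolding shift_incidence_def by auto

lemma converse_shift_incidence: "(shift_incidence v b I)\<inverse> = shift_incidence b v (I\<inverse>)"
  unfolding shift_incidence_def by auto

lemma rtrancl_bip_adj_shift:
  "(x, y) \<in> (bip_adj I)\<^sup>* \<Longrightarrow>
    (shift_vertex v b x, shift_vertex v b y) \<in> (bip_adj (shift_incidence v b I))\<^sup>*"
  by (rule rtrancl_map) (auto simp: bip_adj_def shift_vertex_def shift_incidence_def)

lemma bip_vertices_add:
  "bip_vertices (v1 + v2) (b1 + b2) = bip_vertices v1 b1 \<union> shift_vertex v1 b1 ` bip_vertices v2 b2"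
proof -
  have "{..<m + n} = {..<m} \<union> (+) m ` {..<n}" for m n :: nat
    by (auto simp: lessThan_atLeast0)
  then show ?thesis
    unfolding bip_vertices_def shift_vertex_def by (auto simp: image_Un image_image)
qed

text \<open>The disjoint union of two configurations, joined by the edge switch which replaces the
  incidences \<open>p\<^sub>1l\<^sub>1\<close> and \<open>p\<^sub>2l\<^sub>2\<close> by \<open>p\<^sub>1l\<^sub>2\<close> and \<open>p\<^sub>2l\<^sub>1\<close>; all degrees are preserved.\<close>

definition glue :: "nat \<Rightarrow> nat \<Rightarrow> (nat \<times> nat) set \<Rightarrow> nat \<Rightarrow> nat \<Rightarrow> (nat \<times> nat) set \<Rightarrow> nat \<Rightarrow> nat
    \<Rightarrow> (nat \<times> nat) set" where
  "glue v1 b1 I1 p1 l1 I2 p2 l2 =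
     (I1 - {(p1, l1)}) \<union> shift_incidence v1 b1 (I2 - {(p2, l2)}) \<union> {(p1, b1 + l2), (v1 + p2, l1)}"

lemma converse_glue:
  "(glue v1 b1 I1 p1 l1 I2 p2 l2)\<inverse> = glue b1 v1 (I1\<inverse>) l1 p1 (I2\<inverse>) l2 p2"
proof -
  have "(I - {(p, l)})\<inverse> = I\<inverse> - {(l, p)}" for I :: "(nat \<times> nat) set" and p l
    by blast
  moreover have "{(a, b), (c, d)}\<inverse> = {(d, c), (b, a)}" for a b c d :: nat
    by blast
  ultimately show ?thesis unfolding glue_def converse_Un converse_shift_incidence by simp
qed

locale incidence_gluing =
  fixes v1 b1 v2 b2 :: nat and I1 I2 :: "(nat \<times> nat) set" and p1 l1 p2 l2 :: nat
  assumes subset1: "I1 \<subseteq> {..<v1} \<times> {..<b1}" and subset2: "I2 \<subseteq> {..<v2} \<times> {..<b2}"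
    and edge1: "(p1, l1) \<in> I1" and edge2: "(p2, l2) \<in> I2"
begin

abbreviation J :: "(nat \<times> nat) set" where
  "J \<equiv> glue v1 b1 I1 p1 l1 I2 p2 l2"

lemma p1_less: "p1 < v1" and l1_less: "l1 < b1"
  using edge1 subset1 by auto

lemma converse_incidence_gluing: "incidence_gluing b1 v1 b2 v2 (I1\<inverse>) (I2\<inverse>) l1 p1 l2 p2"
  using subset1 subset2 edge1 edge2 by unfold_locales auto

lemma glue_subset: "J \<subseteq> {..<v1 + v2} \<times> {..<b1 + b2}"
  using subset1 subset2 edge1 edge2 unfolding glue_def by (fastforce simp: mem_shift_incidence_iff)

lemma mem_glue_left_iff:
  "p < v1 \<Longrightarrow> (p, l) \<in> J \<longleftrightarrow> ((p, l) \<in> I1 \<and> (p, l) \<noteq> (p1, l1)) \<or> (p = p1 \<and> l = b1 + l2)"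
  unfolding glue_def by (auto simp: mem_shift_incidence_iff)

lemma mem_glue_right_iff:
  "(v1 + q, l) \<in> J \<longleftrightarrow>
    (\<exists>m. l = b1 + m \<and> (q, m) \<in> I2 \<and> (q, m) \<noteq> (p2, l2)) \<or> (q = p2 \<and> l = l1)"
  using subset1 p1_less unfolding glue_def by (auto simp: mem_shift_incidence_iff)

lemma glue_point_neighbours_left:
  "p < v1 \<Longrightarrow> {l. (p, l) \<in> J} =
    (if p = p1 then insert (b1 + l2) ({l. (p1, l) \<in> I1} - {l1}) else {l. (p, l) \<in> I1})"
  by (auto simp: mem_glue_left_iff)

lemma glue_point_neighbours_right:
  "{l. (v1 + q, l) \<in> J} =
    (if q = p2 then insert l1 ((+) b1 ` {m. (p2, m) \<in> I2} - {b1 + l2}) else (+) b1 ` {m. (q, m) \<in> I2})"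
  by (auto simp: mem_glue_right_iff)

lemma glue_point_degree:
  assumes deg1: "\<And>p. p < v1 \<Longrightarrow> card {l. (p, l) \<in> I1} = r"
    and deg2: "\<And>q. q < v2 \<Longrightarrow> card {l. (q, l) \<in> I2} = r"
    and "p < v1 + v2"
  shows "card {l. (p, l) \<in> J} = r"
proof -
  have fin1: "finite {l. (p, l) \<in> I1}" for p
    by (rule finite_subset[of _ "{..<b1}"]) (use subset1 in auto)
  have fin2: "finite ((+) b1 ` {l. (q, l) \<in> I2})" for q
    by (rule finite_imageI, rule finite_subset[of _ "{..<b2}"]) (use subset2 in auto)
  have card_shift: "card ((+) b1 ` A) = card A" for A :: "nat set"
    by (simp add: card_image)
  consider "p < v1" | q where "p = v1 + q" "q < v2"
    using \<open>p < v1 + v2\<close> by (metis add_diff_inverse_nat add_less_cancel_left)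
  then show ?thesis
  proof cases
    case 1
    have "b1 + l2 \<notin> {l. (p1, l) \<in> I1}" using subset1 by auto
    then show ?thesis
      using 1 card_insert_Diff_singleton[OF fin1] edge1 deg1 p1_less
      by (simp add: glue_point_neighbours_left)
  next
    case (2 q)
    have "l1 \<notin> (+) b1 ` {m. (p2, m) \<in> I2}" using l1_less by auto
    then have "card (insert l1 ((+) b1 ` {m. (p2, m) \<in> I2} - {b1 + l2})) = r"
      using card_insert_Diff_singleton[OF fin2] edge2 deg2[of p2] subset2
      by (auto simp: card_shift)
    then show ?thesis using 2 deg2 by (simp add: glue_point_neighbours_right card_shift)
  qed
qed

lemma glue_line_degree:
  assumes "\<And>l. l < b1 \<Longrightarrow> card {p. (p, l) \<in> I1} = k"
    and "\<And>m. m < b2 \<Longrightarrow> card {p. (p, m) \<in> I2} = k"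
    and "l < b1 + b2"
  shows "card {p. (p, l) \<in> J} = k"
proof -
  interpret T: incidence_gluing b1 v1 b2 v2 "I1\<inverse>" "I2\<inverse>" l1 p1 l2 p2
    by (rule converse_incidence_gluing)
  have "{p. (p, l) \<in> J} = {p. (l, p) \<in> T.J}"
    using converse_glue[of v1 b1 I1 p1 l1 I2 p2 l2] by blast
  with T.glue_point_degree[of k] assms show ?thesis by simp
qed

lemma glue_cross_edge:
  assumes "(x, y) \<in> J" and "(x < v1) \<noteq> (y < b1)"
  shows "(x = p1 \<and> y = b1 + l2) \<or> (x = v1 + p2 \<and> y = l1)"
proof (cases "x < v1")
  case True
  then show ?thesis using assms subset1 mem_glue_left_iff[of x y] by auto
next
  case False
  then obtain q where "x = v1 + q" by (metis le_add_diff_inverse not_less)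
  then show ?thesis using assms mem_glue_right_iff[of q y] by auto
qed

lemma glue_left_block: "(x, y) \<in> J \<Longrightarrow> x < v1 \<Longrightarrow> y < b1 \<Longrightarrow> (x, y) \<in> I1"
  using mem_glue_left_iff by auto

lemma glue_right_block: "(v1 + x, b1 + y) \<in> J \<Longrightarrow> (x, y) \<in> I2"
  using mem_glue_right_iff l1_less by auto

lemma not_mem_glue_p1_l1: "(p1, l1) \<notin> J"
  using mem_glue_left_iff[OF p1_less] l1_less by simp

text \<open>The two switched incidences are the only ones joining the two halves, and they have distinct
  points and distinct lines.\<close>

lemma glue_common_line_same_half:
  "(x, y) \<in> J \<Longrightarrow> (x', y) \<in> J \<Longrightarrow> (x < v1) = (x' < v1) \<Longrightarrow> (x < v1) \<noteq> (y < b1) \<Longrightarrow> x = x'"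
  using glue_cross_edge[of x y] glue_cross_edge[of x' y] l1_less by auto

lemma glue_common_line_across:
  assumes "(x, y) \<in> J" "(x', y) \<in> J" "x < v1" "\<not> x' < v1"
  shows "(y = l1 \<and> x' = v1 + p2) \<or> (y = b1 + l2 \<and> x = p1)"
  using glue_cross_edge[OF assms(1)] glue_cross_edge[OF assms(2)] assms(3,4)
  by (cases "y < b1") auto

lemma glue_no_4cycle:
  assumes no_4cycle1: "\<And>p q l m. (p, l) \<in> I1 \<Longrightarrow> (q, l) \<in> I1 \<Longrightarrow> (p, m) \<in> I1 \<Longrightarrow> (q, m) \<in> I1
      \<Longrightarrow> p = q \<or> l = m"
    and no_4cycle2: "\<And>p q l m. (p, l) \<in> I2 \<Longrightarrow> (q, l) \<in> I2 \<Longrightarrow> (p, m) \<in> I2 \<Longrightarrow> (q, m) \<in> I2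
      \<Longrightarrow> p = q \<or> l = m"
    and cycle: "(p, l) \<in> J" "(q, l) \<in> J" "(p, m) \<in> J" "(q, m) \<in> J"
  shows "p = q \<or> l = m"
proof (rule ccontr)
  assume "\<not> (p = q \<or> l = m)"
  then have "p \<noteq> q" "l \<noteq> m" by auto
  have mixed: False
    if "(x, l) \<in> J" "(x', l) \<in> J" "(x, m) \<in> J" "(x', m) \<in> J" "x < v1" "\<not> x' < v1" for x x'
    using glue_common_line_across[OF that(1,2,5,6)] glue_common_line_across[OF that(3,4,5,6)]
      \<open>l \<noteq> m\<close> not_mem_glue_p1_l1 that(1,3) by auto
  consider "p < v1" "q < v1" | "\<not> p < v1" "\<not> q < v1" | "p < v1" "\<not> q < v1" | "\<not> p < v1" "q < v1"
    by blast
  then show False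
  proof cases
    case 1
    then have "l < b1" "m < b1"
      using glue_common_line_same_half[OF cycle(1,2)] glue_common_line_same_half[OF cycle(3,4)]
        \<open>p \<noteq> q\<close> by auto
    then show False
      using no_4cycle1[OF glue_left_block glue_left_block glue_left_block glue_left_block]
        cycle 1 \<open>p \<noteq> q\<close> \<open>l \<noteq> m\<close> by blast
  next
    case 2
    then have "\<not> l < b1" "\<not> m < b1"
      using glue_common_line_same_half[OF cycle(1,2)] glue_common_line_same_half[OF cycle(3,4)]
        \<open>p \<noteq> q\<close> by auto
    then obtain p' q' l' m' where "p = v1 + p'" "q = v1 + q'" "l = b1 + l'" "m = b1 + m'"
      using 2 by (metis le_add_diff_inverse not_less)
    then show False
      using no_4cycle2[OF glue_right_block glue_right_block glue_right_block glue_right_block]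
        cycle \<open>p \<noteq> q\<close> \<open>l \<noteq> m\<close> by blast
  next
    case 3
    then show False using mixed[OF cycle] by blast
  next
    case 4
    then show False using mixed[OF cycle(2,1,4,3)] by blast
  qed
qed

text \<open>Deleting the non-bridge \<open>p\<^sub>1l\<^sub>1\<close> keeps the first half connected, while deleting \<open>p\<^sub>2l\<^sub>2\<close>
  leaves every vertex of the second half connected to \<open>p\<^sub>2\<close> or \<open>l\<^sub>2\<close>, which are joined to the first
  half by the new incidences.\<close>

lemma glue_connected:
  assumes conn1: "\<And>x y. x \<in> bip_vertices v1 b1 \<Longrightarrow> y \<in> bip_vertices v1 b1 \<Longrightarrow> (x, y) \<in> (bip_adj I1)\<^sup>*"
    and conn2: "\<And>x y. x \<in> bip_vertices v2 b2 \<Longrightarrow> y \<in> bip_vertices v2 b2 \<Longrightarrow> (x, y) \<in> (bip_adj I2)\<^sup>*"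
    and non_bridge: "(Inl p1, Inr l1) \<in> (bip_adj (I1 - {(p1, l1)}))\<^sup>*"
    and x: "x \<in> bip_vertices (v1 + v2) (b1 + b2)"
  shows "(Inl p1, x) \<in> (bip_adj J)\<^sup>*"
proof -
  have J_mono: "(bip_adj I)\<^sup>* \<subseteq> (bip_adj J)\<^sup>*" if "I \<subseteq> J" for I
    using rtrancl_mono[OF bip_adj_mono[OF that]] .
  have left: "(Inl p1, y) \<in> (bip_adj J)\<^sup>*" if "y \<in> bip_vertices v1 b1" for y
  proof -
    have "(Inl p1, y) \<in> (bip_adj I1)\<^sup>*"
      using conn1 that p1_less by (simp add: mem_bip_vertices_iff)
    then have "(Inl p1, y) \<in> (bip_adj (I1 - {(p1, l1)}))\<^sup>*"
      using rtrancl_Diff_non_bridge[OF sym_bip_adj non_bridge[unfolded bip_adj_Diff_edge]]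
      unfolding bip_adj_Diff_edge by blast
    then show ?thesis using J_mono[of "I1 - {(p1, l1)}"] unfolding glue_def by blast
  qed
  have right: "(Inl p1, shift_vertex v1 b1 y) \<in> (bip_adj J)\<^sup>*" if "y \<in> bip_vertices v2 b2" for y
  proof -
    let ?I2' = "I2 - {(p2, l2)}"
    have "(Inl p2, y) \<in> (bip_adj I2)\<^sup>*"
      using conn2 that edge2 subset2 by (auto simp: mem_bip_vertices_iff)
    then have "(Inl p2, y) \<in> (bip_adj ?I2')\<^sup>* \<or> (Inr l2, y) \<in> (bip_adj ?I2')\<^sup>*"
      unfolding bip_adj_Diff_edge by (rule rtrancl_Diff_edge)
    moreover have shifted: "(shift_vertex v1 b1 a, shift_vertex v1 b1 y) \<in> (bip_adj J)\<^sup>*"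
      if "(a, y) \<in> (bip_adj ?I2')\<^sup>*" for a
      using rtrancl_bip_adj_shift[OF that] J_mono[of "shift_incidence v1 b1 ?I2'"]
      unfolding glue_def by blast
    ultimately have "(Inl (v1 + p2), shift_vertex v1 b1 y) \<in> (bip_adj J)\<^sup>*
        \<or> (Inr (b1 + l2), shift_vertex v1 b1 y) \<in> (bip_adj J)\<^sup>*"
      using shifted[of "Inl p2"] shifted[of "Inr l2"] by (auto simp: shift_vertex_def)
    moreover have "(Inr l1, Inl (v1 + p2)) \<in> bip_adj J" "(Inl p1, Inr (b1 + l2)) \<in> bip_adj J"
      by (auto intro: bip_adjI simp: glue_def)
    moreover have "(Inl p1, Inr l1) \<in> (bip_adj J)\<^sup>*"
      using left l1_less by (simp add: mem_bip_vertices_iff)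
    ultimately show ?thesis
      by (meson converse_rtrancl_into_rtrancl rtrancl_into_rtrancl rtrancl_trans)
  qed
  show ?thesis using x left right unfolding bip_vertices_add by blast
qed

lemma glue_is_configuration:
  assumes conf1: "is_configuration v1 b1 r k I1" and conf2: "is_configuration v2 b2 r k I2"
    and non_bridge: "(Inl p1, Inr l1) \<in> (bip_adj (I1 - {(p1, l1)}))\<^sup>*"
  shows "is_configuration (v1 + v2) (b1 + b2) r k J"
proof (rule is_configurationI[OF glue_subset])
  show "card {l. (p, l) \<in> J} = r" if "p < v1 + v2" for p
    using glue_point_degree configuration_point_degree[OF conf1] configuration_point_degree[OF conf2]
      that by blast
  show "card {p. (p, l) \<in> J} = k" if "l < b1 + b2" for l
    using glue_line_degree configuration_line_degree[OF conf1] configuration_line_degree[OF conf2]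
      that by blast
  show "p = q \<or> l = m" if "(p, l) \<in> J" "(q, l) \<in> J" "(p, m) \<in> J" "(q, m) \<in> J" for p q l m
    using glue_no_4cycle configuration_no_4cycle[OF conf1] configuration_no_4cycle[OF conf2] that
    by blast
  show "(Inl p1, x) \<in> (bip_adj J)\<^sup>*" if "x \<in> bip_vertices (v1 + v2) (b1 + b2)" for x
    using glue_connected configuration_connected[OF conf1] configuration_connected[OF conf2]
      non_bridge that by blast
qed

end

lemma configuration_without_points:
  "is_configuration 0 b r k I \<Longrightarrow> k > 0 \<Longrightarrow> b = 0"
  using configuration_line_degree[of 0 b r k I 0] configuration_subset[of 0 b r k I] by fastforce

lemma configurable_add:
  assumes conf1: "configurable v1 b1 r k" and conf2: "configurable v2 b2 r k"
    and "r \<ge> 2" "k \<ge> 2"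
  shows "configurable (v1 + v2) (b1 + b2) r k"
proof (cases "v1 = 0 \<and> b1 = 0 \<or> v2 = 0 \<and> b2 = 0")
  case True
  then show ?thesis using assms by auto
next
  case False
  then obtain I1 I2 where I1: "is_configuration v1 b1 r k I1" and I2: "is_configuration v2 b2 r k I2"
    using conf1 conf2 unfolding configurable_def by auto
  then have "v1 > 0" "v2 > 0"
    using False configuration_without_points \<open>k \<ge> 2\<close> by (metis gr0I not_numeral_le_zero)+
  obtain p1 l1 where e1: "(p1, l1) \<in> I1" and non_bridge: "(Inl p1, Inr l1) \<in> (bip_adj (I1 - {(p1, l1)}))\<^sup>*"
    using configuration_non_bridge[OF I1 \<open>v1 > 0\<close> \<open>r \<ge> 2\<close> \<open>k \<ge> 2\<close>] .
  have "card {l. (0, l) \<in> I2} = r" using configuration_point_degree[OF I2 \<open>v2 > 0\<close>] .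
  then obtain l2 where e2: "(0, l2) \<in> I2" using \<open>r \<ge> 2\<close> by fastforce
  interpret incidence_gluing v1 b1 v2 b2 I1 I2 p1 l1 0 l2
    using I1 I2 e1 e2 by unfold_locales (auto dest: configuration_subset)
  show ?thesis
    using glue_is_configuration[OF I1 I2 non_bridge] unfolding configurable_def by blast
qed

section \<open>Lifts of complete bipartite multigraphs\<close>

lemma mult_add_eq_mult_add_iff:
  fixes x x' n :: nat
  assumes "x < n" "x' < n"
  shows "i * n + x = i' * n + x' \<longleftrightarrow> i = i' \<and> x = x'"
proof
  assume eq: "i * n + x = i' * n + x'"
  have "i = (i * n + x) div n" "x = (i * n + x) mod n"
    "i' = (i' * n + x') div n" "x' = (i' * n + x') mod n"
    using assms by simp_all
  then show "i = i' \<and> x = x'" using eq by metis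
qed simp

lemma mult_add_less_mult: "i < k \<Longrightarrow> (x::nat) < n \<Longrightarrow> i * n + x < k * n"
  using mult_le_mono1[of "Suc i" k n] by simp

lemma less_mult_cases:
  fixes p k n :: nat
  assumes "p < k * n"
  obtains i x where "p = i * n + x" "i < k" "x < n"
proof
  show "p = p div n * n + p mod n" by simp
  have "n > 0" using assms by (cases n) auto
  then show "p div n < k" "p mod n < n"
    using assms by (simp_all add: less_mult_imp_div_less)
qed

definition add_mod :: "nat \<Rightarrow> int \<Rightarrow> nat \<Rightarrow> nat" where
  "add_mod n z c = nat ((int c + z) mod int n)"

lemma add_mod_less: "n > 0 \<Longrightarrow> add_mod n z c < n"
  by (simp add: add_mod_def nat_less_iff)

lemma int_add_mod: "n > 0 \<Longrightarrow> int (add_mod n z c) = (int c + z) mod int n"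
  by (simp add: add_mod_def)

lemma add_mod_eq_iff:
  assumes "n > 0"
  shows "add_mod n z c = add_mod n z' c' \<longleftrightarrow> [int c + z = int c' + z'] (mod int n)"
  using int_add_mod[OF assms] unfolding cong_def by (metis of_nat_eq_iff)

lemma add_mod_add: "n > 0 \<Longrightarrow> add_mod n z (add_mod n z' c) = add_mod n (z' + z) c"
  by (simp add: add_mod_def mod_add_left_eq add.assoc)

lemma add_mod_cong: "[z = z'] (mod int n) \<Longrightarrow> add_mod n z c = add_mod n z' c"
  unfolding add_mod_def cong_def by (metis mod_add_right_eq)

lemma add_mod_zero: "c < n \<Longrightarrow> add_mod n 0 c = c"
  by (simp add: add_mod_def)

lemma add_mod_one: "add_mod n 1 c = (c + 1) mod n"
proof -
  have "(int c + 1) mod int n = int ((c + 1) mod n)"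
    by (simp only: of_nat_mod of_nat_add of_nat_1)
  then show ?thesis by (simp add: add_mod_def)
qed

lemma add_mod_eq_iff_inverse:
  assumes "n > 0" "c < n" "x < n"
  shows "add_mod n z c = x \<longleftrightarrow> c = add_mod n (- z) x"
proof -
  have "add_mod n z c = add_mod n 0 x \<longleftrightarrow> add_mod n 0 c = add_mod n (- z) x"
    unfolding add_mod_eq_iff[OF assms(1)] cong_iff_dvd_diff by (simp add: algebra_simps)
  then show ?thesis using add_mod_zero assms(2,3) by simp
qed

text \<open>The \<open>n\<close>-fold lift of the complete bipartite multigraph with \<open>kk\<close> points, \<open>rr\<close> lines and \<open>g\<close>
  parallel edges between any point and line, the \<open>j\<close>-th edge between point \<open>i\<close> and line \<open>a\<close>
  carrying the voltage \<open>F i a j\<close> in \<open>\<int>/n\<close>. Point \<open>i * n + x\<close> and line \<open>a * n + c\<close> are the copies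
  of \<open>i\<close> and \<open>a\<close> over the residues \<open>x\<close> and \<open>c\<close>. The voltages vanish on the spanning tree
  formed by the edges \<open>0\<close> at point \<open>0\<close> and at line \<open>0\<close>, and the lift has no 4-cycles iff no
  closed walk of length four other than one retracing itself has voltage zero.\<close>

locale voltage_lift =
  fixes kk rr g n :: nat and F :: "nat \<Rightarrow> nat \<Rightarrow> nat \<Rightarrow> int"
  assumes n_pos: "n > 0" and kk_pos: "kk > 0" and rr_pos: "rr > 0" and g_pos: "g > 0"
    and parallel_voltages_distinct: "\<And>i a j j'. i < kk \<Longrightarrow> a < rr \<Longrightarrow> j < g \<Longrightarrow> j' < g
      \<Longrightarrow> [F i a j = F i a j'] (mod int n) \<Longrightarrow> j = j'"
    and closed_walk_voltage: "\<And>i i' a a' j1 j2 j3 j4. i < kk \<Longrightarrow> i' < kk \<Longrightarrow> a < rr \<Longrightarrow> a' < rr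
      \<Longrightarrow> j1 < g \<Longrightarrow> j2 < g \<Longrightarrow> j3 < g \<Longrightarrow> j4 < g
      \<Longrightarrow> [F i a j1 + F i' a' j4 = F i' a j2 + F i a' j3] (mod int n)
      \<Longrightarrow> (i = i' \<and> j1 = j2) \<or> (a = a' \<and> j1 = j3)"
    and voltage_point_star: "\<And>i. i < kk \<Longrightarrow> F i 0 0 = 0"
    and voltage_line_star: "\<And>a. a < rr \<Longrightarrow> F 0 a 0 = 0"
begin

definition lift :: "(nat \<times> nat) set" where
  "lift = {(i * n + add_mod n (F i a j) c, a * n + c) | i a j c. i < kk \<and> a < rr \<and> j < g \<and> c < n}"

lemma lift_subset: "lift \<subseteq> {..<kk * n} \<times> {..<rr * n}"
  unfolding lift_def using add_mod_less[OF n_pos] by (auto intro!: mult_add_less_mult)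

lemma mem_lift_iff:
  assumes "x < n" "c < n"
  shows "(i * n + x, a * n + c) \<in> lift \<longleftrightarrow> i < kk \<and> a < rr \<and> (\<exists>j<g. x = add_mod n (F i a j) c)"
  using assms add_mod_less[OF n_pos] unfolding lift_def by (auto simp: mult_add_eq_mult_add_iff)

lemma lift_edge:
  "i < kk \<Longrightarrow> a < rr \<Longrightarrow> j < g \<Longrightarrow> c < n \<Longrightarrow> (i * n + add_mod n (F i a j) c, a * n + c) \<in> lift"
  unfolding lift_def by blast

lemma lift_point_degree:
  assumes "p < kk * n"
  shows "card {l. (p, l) \<in> lift} = rr * g"
proof -
  obtain i x where p: "p = i * n + x" "i < kk" "x < n" using less_mult_cases[OF assms] .
  define f where "f = (\<lambda>(a, j). a * n + add_mod n (- F i a j) x)"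
  have "{l. (p, l) \<in> lift} = f ` ({..<rr} \<times> {..<g})"
  proof (intro set_eqI iffI)
    fix l assume "l \<in> {l. (p, l) \<in> lift}"
    then obtain a c where l: "l = a * n + c" "c < n" using lift_subset less_mult_cases by blast
    with \<open>l \<in> _\<close> obtain j where "a < rr" "j < g" "x = add_mod n (F i a j) c"
      using mem_lift_iff p by auto
    then show "l \<in> f ` ({..<rr} \<times> {..<g})"
      using l p add_mod_eq_iff_inverse[OF n_pos] unfolding f_def by force
  next
    fix l assume "l \<in> f ` ({..<rr} \<times> {..<g})"
    then obtain a j where "a < rr" "j < g" "l = a * n + add_mod n (- F i a j) x"
      unfolding f_def by auto
    moreover define c where "c = add_mod n (- F i a j) x"
    moreover have "c < n" unfolding c_def by (rule add_mod_less[OF n_pos])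
    moreover have "add_mod n (F i a j) c = x"
      by (subst add_mod_eq_iff_inverse[OF n_pos \<open>c < n\<close> \<open>x < n\<close>]) (rule c_def)
    ultimately show "l \<in> {l. (p, l) \<in> lift}"
      using p mem_lift_iff by auto
  qed
  moreover have "inj_on f ({..<rr} \<times> {..<g})"
  proof (rule inj_onI, clarify)
    fix a j a' j' assume "a < rr" "j < g" "a' < rr" "j' < g" "f (a, j) = f (a', j')"
    then have "a = a'" "add_mod n (- F i a j) x = add_mod n (- F i a j') x"
      unfolding f_def using mult_add_eq_mult_add_iff[OF add_mod_less add_mod_less] n_pos by auto
    then have "[- F i a j = - F i a j'] (mod int n)"
      using cong_add_lcancel[of "int x" "- F i a j" "- F i a j'"] by (simp add: add_mod_eq_iff[OF n_pos])
    then have "[F i a j = F i a j'] (mod int n)" by (simp add: cong_minus_minus_iff)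
    then show "a = a' \<and> j = j'"
      using parallel_voltages_distinct \<open>a = a'\<close> p \<open>a < rr\<close> \<open>j < g\<close> \<open>j' < g\<close> by blast
  qed
  ultimately show ?thesis by (simp add: card_image card_cartesian_product)
qed

lemma lift_line_degree:
  assumes "l < rr * n"
  shows "card {p. (p, l) \<in> lift} = kk * g"
proof -
  obtain a c where l: "l = a * n + c" "a < rr" "c < n" using less_mult_cases[OF assms] .
  define f where "f = (\<lambda>(i, j). i * n + add_mod n (F i a j) c)"
  have "{p. (p, l) \<in> lift} = f ` ({..<kk} \<times> {..<g})"
  proof (intro set_eqI iffI)
    fix p assume "p \<in> {p. (p, l) \<in> lift}"
    then obtain i x where p: "p = i * n + x" "x < n" using lift_subset less_mult_cases by blast
    with \<open>p \<in> _\<close> show "p \<in> f ` ({..<kk} \<times> {..<g})"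
      using mem_lift_iff l unfolding f_def by force
  next
    fix p assume "p \<in> f ` ({..<kk} \<times> {..<g})"
    then show "p \<in> {p. (p, l) \<in> lift}"
      using l lift_edge unfolding f_def by auto
  qed
  moreover have "inj_on f ({..<kk} \<times> {..<g})"
  proof (rule inj_onI, clarify)
    fix i j i' j' assume "i < kk" "j < g" "i' < kk" "j' < g" "f (i, j) = f (i', j')"
    then have "i = i'" "add_mod n (F i a j) c = add_mod n (F i a j') c"
      unfolding f_def using mult_add_eq_mult_add_iff[OF add_mod_less add_mod_less] n_pos by auto
    then have "[F i a j = F i a j'] (mod int n)"
      by (simp add: add_mod_eq_iff[OF n_pos] cong_add_lcancel)
    then show "i = i' \<and> j = j'"
      using parallel_voltages_distinct \<open>i = i'\<close> l \<open>i < kk\<close> \<open>j < g\<close> \<open>j' < g\<close> by blast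
  qed
  ultimately show ?thesis by (simp add: card_image card_cartesian_product)
qed

lemma lift_no_4cycle:
  assumes "(p, l) \<in> lift" "(q, l) \<in> lift" "(p, m) \<in> lift" "(q, m) \<in> lift"
  shows "p = q \<or> l = m"
proof -
  have "p < kk * n" "q < kk * n" "l < rr * n" "m < rr * n"
    using assms(1,4) lift_subset by auto
  obtain i x where p: "p = i * n + x" "i < kk" "x < n" using less_mult_cases[OF \<open>p < kk * n\<close>] .
  obtain i' x' where q: "q = i' * n + x'" "i' < kk" "x' < n" using less_mult_cases[OF \<open>q < kk * n\<close>] .
  obtain a c where l: "l = a * n + c" "a < rr" "c < n" using less_mult_cases[OF \<open>l < rr * n\<close>] .
  obtain a' c' where m: "m = a' * n + c'" "a' < rr" "c' < n" using less_mult_cases[OF \<open>m < rr * n\<close>] .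
  obtain j1 j2 j3 j4 where j: "j1 < g" "j2 < g" "j3 < g" "j4 < g"
    and x: "x = add_mod n (F i a j1) c" "x = add_mod n (F i a' j3) c'"
    and x': "x' = add_mod n (F i' a j2) c" "x' = add_mod n (F i' a' j4) c'"
    using assms mem_lift_iff p q l m by (auto 0 0)
  from x x' have cong: "[int c + F i a j1 = int c' + F i a' j3] (mod int n)"
    "[int c + F i' a j2 = int c' + F i' a' j4] (mod int n)"
    by (simp_all add: add_mod_eq_iff[OF n_pos, symmetric])
  then have "int n dvd ((int c + F i a j1) - (int c' + F i a' j3)) - ((int c + F i' a j2) - (int c' + F i' a' j4))"
    unfolding cong_iff_dvd_diff by (rule dvd_diff)
  then have "[F i a j1 + F i' a' j4 = F i' a j2 + F i a' j3] (mod int n)"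
    unfolding cong_iff_dvd_diff by (simp add: algebra_simps)
  then consider "i = i'" "j1 = j2" | "a = a'" "j1 = j3"
    using closed_walk_voltage p q l m j by blast
  then show ?thesis
  proof cases
    case 1
    then show ?thesis using p q x x' by simp
  next
    case 2
    with cong(1) have "[int c = int c'] (mod int n)" by (simp add: cong_add_rcancel)
    then have "c = c'" using l m cong_int_iff cong_less_modulus_unique_nat by blast
    then show ?thesis using l m 2 by simp
  qed
qed

lemma lift_star_edges:
  "i < kk \<Longrightarrow> c < n \<Longrightarrow> (i * n + c, c) \<in> lift"
  "a < rr \<Longrightarrow> c < n \<Longrightarrow> (c, a * n + c) \<in> lift"
  using lift_edge[of i 0 0 c] lift_edge[of 0 a 0 c] kk_pos rr_pos g_pos
  by (simp_all add: voltage_point_star voltage_line_star add_mod_zero)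

text \<open>A line over residue \<open>c\<close> reaches the line over \<open>c + F i0 a0 j0\<close> by going along the lifted
  edge \<open>j0\<close> and returning through the zero-voltage star.\<close>

lemma lift_line_step:
  assumes "i0 < kk" "a0 < rr" "j0 < g" "c < n"
  shows "(Inr (a0 * n + c), Inr (a0 * n + add_mod n (F i0 a0 j0) c)) \<in> (bip_adj lift)\<^sup>*"
proof -
  define y where "y = add_mod n (F i0 a0 j0) c"
  have "y < n" unfolding y_def by (rule add_mod_less[OF n_pos])
  have "(Inr (a0 * n + c), Inl (i0 * n + y)) \<in> bip_adj lift"
    using lift_edge[OF assms] unfolding y_def by (rule bip_adjI)
  moreover have "(Inl (i0 * n + y), Inr y) \<in> bip_adj lift"
    using lift_star_edges(1)[OF \<open>i0 < kk\<close> \<open>y < n\<close>] by (rule bip_adjI)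
  moreover have "(Inr y, Inl y) \<in> bip_adj lift"
    using lift_star_edges(1)[OF kk_pos \<open>y < n\<close>] by (simp add: bip_adjI)
  moreover have "(Inl y, Inr (a0 * n + y)) \<in> bip_adj lift"
    using lift_star_edges(2)[OF \<open>a0 < rr\<close> \<open>y < n\<close>] by (rule bip_adjI)
  ultimately show ?thesis unfolding y_def
    by (meson converse_rtrancl_into_rtrancl r_into_rtrancl)
qed

lemma lift_line_connected:
  assumes "i0 < kk" "a0 < rr" "j0 < g" "coprime (F i0 a0 j0) (int n)" "c < n"
  shows "(Inr (a0 * n), Inr (a0 * n + c)) \<in> (bip_adj lift)\<^sup>*"
proof -
  let ?V = "F i0 a0 j0"
  have iterate: "(Inr (a0 * n + c), Inr (a0 * n + add_mod n (int t * ?V) c)) \<in> (bip_adj lift)\<^sup>*"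
    if "c < n" for c t
  proof (induction t)
    case 0
    then show ?case using that by (simp add: add_mod_zero)
  next
    case (Suc t)
    have "add_mod n ?V (add_mod n (int t * ?V) c) = add_mod n (int (Suc t) * ?V) c"
      using add_mod_add[OF n_pos] by (simp add: algebra_simps)
    then show ?case
      using Suc rtrancl_trans lift_line_step[OF assms(1-3) add_mod_less[OF n_pos]] by metis
  qed
  text \<open>Since \<open>F i0 a0 j0\<close> is a unit mod \<open>n\<close>, some multiple of it steps from \<open>c\<close> to \<open>c + 1\<close>.\<close>
  obtain u where u: "[u * ?V = 1] (mod int n)"
    using cong_solve_coprime_int assms(4) by (metis mult.commute)
  have "[int (nat (u mod int n)) = u] (mod int n)" using n_pos by (simp add: cong_def)
  then have "[int (nat (u mod int n)) * ?V = 1] (mod int n)"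
    using u by (metis cong_scalar_right cong_trans)
  then have succ: "(Inr (a0 * n + c), Inr (a0 * n + (c + 1) mod n)) \<in> (bip_adj lift)\<^sup>*" if "c < n" for c
    using iterate[OF that] add_mod_cong add_mod_one by metis
  show ?thesis
    using \<open>c < n\<close>
  proof (induction c)
    case (Suc c)
    then show ?case using succ[of c] rtrancl_trans by fastforce
  qed simp
qed

lemma lift_connected:
  assumes "i0 < kk" "a0 < rr" "j0 < g" "coprime (F i0 a0 j0) (int n)"
    and "x \<in> bip_vertices (kk * n) (rr * n)"
  shows "(Inr (a0 * n), x) \<in> (bip_adj lift)\<^sup>*"
proof -
  note line = lift_line_connected[OF assms(1-4)]
  consider p where "x = Inl p" "p < kk * n" | l where "x = Inr l" "l < rr * n"
    using assms(5) unfolding bip_vertices_def by auto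
  then show ?thesis
  proof cases
    case (1 p)
    obtain i c where p: "p = i * n + c" "i < kk" "c < n" using less_mult_cases[OF 1(2)] .
    have "(Inr (a0 * n + c), Inl c) \<in> bip_adj lift"
      using lift_star_edges(2)[OF assms(2) p(3)] by (rule bip_adjI)
    moreover have "(Inl c, Inr c) \<in> bip_adj lift"
      using lift_star_edges(1)[OF kk_pos p(3)] by (simp add: bip_adjI)
    moreover have "(Inr c, Inl (i * n + c)) \<in> bip_adj lift"
      using lift_star_edges(1)[OF p(2,3)] by (rule bip_adjI)
    ultimately show ?thesis
      using line[OF p(3)] 1 p(1) by (meson rtrancl_into_rtrancl)
  next
    case (2 l)
    obtain a c where l: "l = a * n + c" "a < rr" "c < n" using less_mult_cases[OF 2(2)] .
    have "(Inr (a0 * n + c), Inl c) \<in> bip_adj lift"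
      using lift_star_edges(2)[OF assms(2) l(3)] by (rule bip_adjI)
    moreover have "(Inl c, Inr (a * n + c)) \<in> bip_adj lift"
      using lift_star_edges(2)[OF l(2,3)] by (rule bip_adjI)
    ultimately show ?thesis
      using line[OF l(3)] 2 l(1) by (meson rtrancl_into_rtrancl)
  qed
qed

lemma lift_is_configuration:
  assumes "i0 < kk" "a0 < rr" "j0 < g" "coprime (F i0 a0 j0) (int n)"
  shows "is_configuration (kk * n) (rr * n) (rr * g) (kk * g) lift"
  using lift_subset lift_point_degree lift_line_degree lift_no_4cycle lift_connected[OF assms]
  by (intro is_configurationI) auto

end

section \<open>Voltages from powers of two\<close>

lemma bit_pow2_add_pow2_iff:
  "bit ((2::nat) ^ a + 2 ^ b) k \<longleftrightarrow> (if a = b then k = Suc a else k = a \<or> k = b)"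
proof (cases "a = b")
  case True
  then have "(2::nat) ^ a + 2 ^ b = 2 ^ Suc a" by simp
  then show ?thesis using True by (simp only: bit_exp_iff possible_bit_nat) simp
next
  case False
  then show ?thesis by (subst bit_disjunctive_add_iff) (auto simp: bit_exp_iff)
qed

lemma pow2_add_pow2_eq_pow2_add_pow2:
  assumes "(2::int) ^ a + 2 ^ b = 2 ^ c + 2 ^ d"
  shows "(a = c \<and> b = d) \<or> (a = d \<and> b = c)"
proof -
  have "int (2 ^ a + 2 ^ b) = int (2 ^ c + 2 ^ d)" using assms by simp
  then have "(2::nat) ^ a + 2 ^ b = 2 ^ c + 2 ^ d" by (simp only: of_nat_eq_iff)
  then have "bit ((2::nat) ^ a + 2 ^ b) k = bit ((2::nat) ^ c + 2 ^ d) k" for k by simp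
  then have bits: "(if a = b then k = Suc a else k = a \<or> k = b) \<longleftrightarrow> (if c = d then k = Suc c else k = c \<or> k = d)"
    for k unfolding bit_pow2_add_pow2_iff .
  show ?thesis
  proof (cases "a = b"; cases "c = d")
    assume "a = b" "c = d"
    then show ?thesis using bits[of "Suc a"] by simp
  next
    assume "a = b" "c \<noteq> d"
    then show ?thesis using bits[of c] bits[of d] by simp
  next
    assume "a \<noteq> b" "c = d"
    then show ?thesis using bits[of a] bits[of b] by simp
  next
    assume "a \<noteq> b" "c \<noteq> d"
    then show ?thesis using bits[of a] bits[of b] bits[of c] by auto
  qed
qed

definition cell_index :: "nat \<Rightarrow> nat \<Rightarrow> nat \<Rightarrow> nat \<Rightarrow> nat \<Rightarrow> nat" where
  "cell_index rr g i a j = (i * rr + a) * g + j"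

lemma cell_index_less: "i < kk \<Longrightarrow> a < rr \<Longrightarrow> j < g \<Longrightarrow> cell_index rr g i a j < kk * rr * g"
  unfolding cell_index_def by (intro mult_add_less_mult) simp_all

lemma cell_index_eq_iff:
  "a < rr \<Longrightarrow> a' < rr \<Longrightarrow> j < g \<Longrightarrow> j' < g \<Longrightarrow>
    cell_index rr g i a j = cell_index rr g i' a' j' \<longleftrightarrow> i = i' \<and> a = a' \<and> j = j'"
  unfolding cell_index_def by (simp add: mult_add_eq_mult_add_iff)

text \<open>The edge with index \<open>e\<close> gets voltage \<open>2^e\<close>, normalised by a potential to vanish on the stars
  of point 0 and line 0; a closed walk of length four then has voltage equal to a signed sum of
  four powers of two, which vanishes only if the walk retraces itself.\<close>

definition pow2_voltage :: "nat \<Rightarrow> nat \<Rightarrow> nat \<Rightarrow> nat \<Rightarrow> nat \<Rightarrow> int" where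
  "pow2_voltage rr g i a j =
     2 ^ cell_index rr g i a j - 2 ^ cell_index rr g i 0 0 - 2 ^ cell_index rr g 0 a 0 + 1"

lemma pow2_voltage_1_1_0: "pow2_voltage rr g 1 1 0 = (2 ^ (rr * g) - 1) * (2 ^ g - 1)"
proof -
  have "cell_index rr g 1 1 0 = rr * g + g" "cell_index rr g 1 0 0 = rr * g" "cell_index rr g 0 1 0 = g"
    unfolding cell_index_def by simp_all
  note index = this
  show ?thesis unfolding pow2_voltage_def index power_add by algebra
qed

lemma pow2_voltage_pos_witness:
  assumes "kk > 0" "rr > 0" "g > 0" and "g \<ge> 2 \<or> kk \<ge> 2 \<and> rr \<ge> 2"
  obtains i a j where "i < kk" "a < rr" "j < g" "pow2_voltage rr g i a j > 0"
proof (cases "g \<ge> 2")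
  case True
  have "pow2_voltage rr g 0 0 1 = 1" by (simp add: pow2_voltage_def cell_index_def)
  then show ?thesis using True assms(1,2) by (intro that[of 0 0 1]) simp_all
next
  case False
  then have "kk \<ge> 2" "rr \<ge> 2" using assms(4) by auto
  have "(1::int) < 2 ^ (rr * g)" "(1::int) < 2 ^ g"
    using assms(2,3) by (simp_all add: one_less_power)
  then have "pow2_voltage rr g 1 1 0 > 0" unfolding pow2_voltage_1_1_0 by simp
  then show ?thesis using \<open>kk \<ge> 2\<close> \<open>rr \<ge> 2\<close> assms(3) by (intro that[of 1 1 0]) simp_all
qed

lemma pow2_cell_index_less:
  assumes "i < kk" "a < rr" "j < g" and "2 ^ (kk * rr * g + 1) < n"
  shows "2 * (2::int) ^ cell_index rr g i a j < int n"
proof -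
  have "int (2 ^ (kk * rr * g + 1)) < int n" using assms(4) by (simp only: of_nat_less_iff)
  then have "2 * 2 ^ (kk * rr * g) < int n" by simp
  moreover have "(2::int) ^ cell_index rr g i a j < 2 ^ (kk * rr * g)"
    using cell_index_less[OF assms(1-3)] by (intro power_strict_increasing) simp_all
  ultimately show ?thesis by linarith
qed

lemma voltage_lift_pow2_voltage:
  assumes "kk > 0" "rr > 0" "g > 0" and n: "2 ^ (kk * rr * g + 1) < n"
  shows "voltage_lift kk rr g n (pow2_voltage rr g)"
proof
  let ?\<sigma> = "\<lambda>i a j. (2::int) ^ cell_index rr g i a j"
  note \<sigma>_less = pow2_cell_index_less[OF _ _ _ n]
  have \<sigma>_pos: "0 \<le> ?\<sigma> i a j" for i a j by simp
  show "n > 0" using n by simp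
  show "kk > 0" "rr > 0" "g > 0" by fact+
  show "j = j'" if "i < kk" "a < rr" "j < g" "j' < g"
    and "[pow2_voltage rr g i a j = pow2_voltage rr g i a j'] (mod int n)" for i a j j'
  proof -
    have "[?\<sigma> i a j = ?\<sigma> i a j'] (mod int n)"
      using that(5) cong_add_rcancel[of "?\<sigma> i a j" "1 - ?\<sigma> i 0 0 - ?\<sigma> 0 a 0" "?\<sigma> i a j'"]
      by (simp add: pow2_voltage_def algebra_simps)
    then have "?\<sigma> i a j = ?\<sigma> i a j'"
      by (rule cong_less_imp_eq_int[rotated 4])
        (use \<sigma>_pos[of i a j] \<sigma>_pos[of i a j'] \<sigma>_less[OF that(1-3)] \<sigma>_less[OF that(1,2,4)] in linarith)+
    then show "j = j'" using cell_index_eq_iff that by simp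
  qed
  show "(i = i' \<and> j1 = j2) \<or> (a = a' \<and> j1 = j3)"
    if "i < kk" "i' < kk" "a < rr" "a' < rr" "j1 < g" "j2 < g" "j3 < g" "j4 < g"
    and "[pow2_voltage rr g i a j1 + pow2_voltage rr g i' a' j4
          = pow2_voltage rr g i' a j2 + pow2_voltage rr g i a' j3] (mod int n)"
    for i i' a a' j1 j2 j3 j4
  proof -
    let ?K = "2 - ?\<sigma> i 0 0 - ?\<sigma> 0 a 0 - ?\<sigma> i' 0 0 - ?\<sigma> 0 a' 0"
    have "[?\<sigma> i a j1 + ?\<sigma> i' a' j4 = ?\<sigma> i' a j2 + ?\<sigma> i a' j3] (mod int n)"
      using that(9) cong_add_rcancel[of "?\<sigma> i a j1 + ?\<sigma> i' a' j4" ?K "?\<sigma> i' a j2 + ?\<sigma> i a' j3"]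
      by (simp add: pow2_voltage_def algebra_simps)
    then have "?\<sigma> i a j1 + ?\<sigma> i' a' j4 = ?\<sigma> i' a j2 + ?\<sigma> i a' j3"
      by (rule cong_less_imp_eq_int[rotated 4])
        (use \<sigma>_pos[of i a j1] \<sigma>_pos[of i' a' j4] \<sigma>_pos[of i' a j2] \<sigma>_pos[of i a' j3]
          \<sigma>_less[OF that(1,3,5)] \<sigma>_less[OF that(2,4,8)] \<sigma>_less[OF that(2,3,6)]
          \<sigma>_less[OF that(1,4,7)] in linarith)+
    then have "(cell_index rr g i a j1 = cell_index rr g i' a j2 \<and> cell_index rr g i' a' j4 = cell_index rr g i a' j3)
      \<or> (cell_index rr g i a j1 = cell_index rr g i a' j3 \<and> cell_index rr g i' a' j4 = cell_index rr g i' a j2)"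
      by (rule pow2_add_pow2_eq_pow2_add_pow2)
    then show ?thesis using that(3-8) by (auto simp: cell_index_eq_iff)
  qed
  show "pow2_voltage rr g i 0 0 = 0" for i
    by (simp add: pow2_voltage_def cell_index_def)
  show "pow2_voltage rr g 0 a 0 = 0" for a
    by (simp add: pow2_voltage_def cell_index_def)
qed

section \<open>The semigroup of configurable multiples\<close>

text \<open>Choose \<open>u < b\<close> with \<open>a u \<equiv> N (mod b)\<close>; then \<open>N - a u\<close> is a multiple of \<open>b\<close>.\<close>

lemma coprime_nat_combination:
  fixes a b N :: nat
  assumes "b > 0" and "coprime a b" and "a * b \<le> N"
  obtains x y where "N = x * a + y * b"
proof -
  obtain x where x: "[a * x = 1] (mod b)" using cong_solve_coprime_nat[OF assms(2)] by auto
  define u where "u = (x * N) mod b"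
  have "[a * u = a * (x * N)] (mod b)" unfolding u_def by (simp add: cong_def mod_mult_right_eq)
  also have "[a * (x * N) = 1 * N] (mod b)"
    using cong_scalar_right[OF x, of N] by (simp add: mult.assoc)
  finally have cong: "[a * u = N] (mod b)" by simp
  have "u < b" unfolding u_def using assms(1) by simp
  then have "a * u \<le> a * b" by simp
  then have "a * u \<le> N" using assms(3) by linarith
  moreover have "N mod b = (a * u) mod b" using cong unfolding cong_def by simp
  ultimately have "b dvd N - a * u" using mod_eq_dvd_iff_nat by blast
  then obtain y where "N - a * u = b * y" ..
  then have "N = u * a + y * b" using \<open>a * u \<le> N\<close> by (simp add: algebra_simps)
  then show ?thesis by (rule that)
qed

lemma numerical_semigroupI_coprime:
  assumes "0 \<in> S" and add: "\<And>x y. x \<in> S \<Longrightarrow> y \<in> S \<Longrightarrow> x + y \<in> S"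
    and "a \<in> S" "b \<in> S" "coprime a b" "b > 0"
  shows "numerical_semigroup S"
proof -
  have mult: "x * c \<in> S" if "c \<in> S" for x c
    by (induction x) (use \<open>0 \<in> S\<close> add that in auto)
  have "N \<in> S" if N: "a * b \<le> N" for N
  proof -
    obtain x y where "N = x * a + y * b"
      using coprime_nat_combination[OF \<open>b > 0\<close> \<open>coprime a b\<close> N] .
    then show ?thesis using add mult \<open>a \<in> S\<close> \<open>b \<in> S\<close> by simp
  qed
  then have "UNIV - S \<subseteq> {..<a * b}" by (meson DiffE lessThan_iff not_le subsetI)
  then have "finite (UNIV - S)" by (rule finite_subset) simp
  with assms show ?thesis unfolding numerical_semigroup_def by blast
qed

lemma coprime_mult_add_one: "coprime (w * m + 1) (w::nat)"
proof -
  have "coprime (w * m) (w * m + 1)" by (rule coprime_add_one_right)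
  then have "coprime w (w * m + 1)" using coprime_mult_left_iff by blast
  then show ?thesis by (rule coprime_commute[THEN iffD1])
qed

lemma D_zero: "0 \<in> D r k"
  unfolding D_def configurable_def by simp

lemma D_add:
  assumes "r \<ge> 2" "k \<ge> 2" "d1 \<in> D r k" "d2 \<in> D r k"
  shows "d1 + d2 \<in> D r k"
proof -
  let ?kk = "k div gcd r k" and ?rr = "r div gcd r k"
  have "configurable (d1 * ?kk + d2 * ?kk) (d1 * ?rr + d2 * ?rr) r k"
    using assms by (intro configurable_add) (simp_all add: D_def)
  then show ?thesis by (simp add: D_def add_mult_distrib)
qed

text \<open>Every \<open>n > 2^(kk rr g + 1)\<close> makes the powers-of-two lift free of 4-cycles, and
  \<open>n \<equiv> 1 (mod W)\<close> makes the voltage \<open>W\<close> a unit mod \<open>n\<close>, hence the lift connected.\<close>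

lemma D_contains_progression:
  assumes r: "r \<ge> 2" and k: "k \<ge> 2"
  obtains W M0 where "W > 0" "\<And>M. M \<ge> M0 \<Longrightarrow> W * M + 1 \<in> D r k"
proof -
  define g where "g = gcd r k"
  define kk where "kk = k div g"
  define rr where "rr = r div g"
  have kk_g: "kk * g = k" and rr_g: "rr * g = r" unfolding kk_def rr_def g_def by simp_all
  have "g > 0" unfolding g_def using r by simp
  have "kk > 0" "rr > 0" using kk_g rr_g r k by (cases kk; cases rr; simp)+
  have "g \<ge> 2 \<or> kk \<ge> 2 \<and> rr \<ge> 2"
    using kk_g rr_g r k \<open>g > 0\<close> by (cases "g = 1") auto
  then obtain i0 a0 j0 where "i0 < kk" "a0 < rr" "j0 < g" and V_pos: "pow2_voltage rr g i0 a0 j0 > 0"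
    using pow2_voltage_pos_witness \<open>kk > 0\<close> \<open>rr > 0\<close> \<open>g > 0\<close> by blast
  define W where "W = nat (pow2_voltage rr g i0 a0 j0)"
  have W: "W > 0" "int W = pow2_voltage rr g i0 a0 j0" unfolding W_def using V_pos by simp_all
  have "W * M + 1 \<in> D r k" if "M \<ge> 2 ^ (kk * rr * g + 1)" for M
  proof -
    define n where "n = W * M + 1"
    have "M \<le> W * M" using \<open>W > 0\<close> by simp
    then have "2 ^ (kk * rr * g + 1) < n" using that unfolding n_def by linarith
    then interpret voltage_lift kk rr g n "pow2_voltage rr g"
      using voltage_lift_pow2_voltage \<open>g > 0\<close> \<open>kk > 0\<close> \<open>rr > 0\<close> by blast
    have "coprime W n" unfolding n_def using coprime_mult_add_one by (simp add: coprime_commute)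
    then have "coprime (pow2_voltage rr g i0 a0 j0) (int n)" by (simp flip: W(2))
    then have "is_configuration (kk * n) (rr * n) r k lift"
      using lift_is_configuration \<open>i0 < kk\<close> \<open>a0 < rr\<close> \<open>j0 < g\<close> unfolding kk_g rr_g by blast
    then have "configurable (n * kk) (n * rr) r k"
      unfolding configurable_def by (simp only: mult.commute) blast
    then show ?thesis unfolding n_def[symmetric] by (simp add: D_def kk_def rr_def g_def)
  qed
  with W(1) show ?thesis by (rule that)
qed

theorem theorem2:
  fixes r k :: nat
  assumes "r \<ge> 2" and "k \<ge> 2"
  shows "numerical_semigroup (D r k)"
proof -
  obtain W M0 where progression: "\<And>M. M \<ge> M0 \<Longrightarrow> W * M + 1 \<in> D r k"
    using D_contains_progression[OF assms] by blast
  have "coprime (W * M0 + 1) (W * M0 + 1 + W)"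
    using coprime_mult_add_one[of W M0] unfolding coprime_iff_gcd_eq_1 gcd_add2 .
  moreover have "W * M0 + 1 \<in> D r k" "W * M0 + 1 + W \<in> D r k"
    using progression[of M0] progression[of "M0 + 1"] by (simp_all add: algebra_simps)
  ultimately show ?thesis
    using numerical_semigroupI_coprime[OF D_zero D_add[OF assms], of "W * M0 + 1" "W * M0 + 1 + W"]
    by simp
qed

end
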